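(* In the variable-assignment instance below, for every well-formed program $C$ and every $P\subseteq\mathcal S$: if $\mathrm{free}(P)\cap\mathrm{mod}(C)=\emptyset$, then $\vDash\{\Box P\}\ C\ \{\Box P\}$.
   Context: $\mathcal A=\langle U,+,\cdot,\mathbf 0,\mathbf 1\rangle$ is a partial semiring ($+$ commutative, associative, possibly partial, unit $\mathbf 0$; $\cdot$ total, associative, unit $\mathbf 1$; two-sided distributivity; $\mathbf 0$ annihilates), naturally ordered ($u\le v$ iff $\exists w.\,u+w=v$ is a partial order), Scott continuous, with a top element. Infinite sums are suprema of finite partial sums. $\mathcal W(X)$: maps $m:X\to U$ with countable support $\mathrm{supp}(m)=\{x:m(x)\ne\mathbf 0\}$ and defined mass, pointwise operations. $\eta(x)(y)=\mathbf 1$ if $x=y$ else $\mathbf 0$; $f^\dagger(m)(y)=\sum_{x\in\mathrm{supp}(m)}m(x)\cdot f(x)(y)$. States are stores $s\in\mathcal S=\mathsf{Var}\to\mathbb Z$ over a countable set of variables $\mathsf{Var}$. Atomic actions are assignments $x:=E$ with integer expressions $E$ (variables, integer constants, tests, $+,-,\times$) and $[\![x:=E]\!](s)=\eta(s[x\mapsto[\![E]\!](s)])$. Programs: $C::=\mathsf{skip}\mid C_1;C_2\mid C_1+C_2\mid\mathsf{assume}\ e\mid C^{\langle e,e'\rangle}\mid x:=E$, with $e$ a test (Boolean combination of $\mathsf{true},\mathsf{false}$ and arbitrary subsets $t\subseteq\mathcal S$, evaluating to $\mathbf 1$ iff true) or a weight $u\in U$. Semantics: $[\![\mathsf{skip}]\!](s)=\eta(s)$;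 $[\![C_1;C_2]\!](s)=[\![C_2]\!]^\dagger([\![C_1]\!](s))$; $[\![C_1+C_2]\!](s)=[\![C_1]\!](s)+[\![C_2]\!](s)$; $[\![\mathsf{assume}\ e]\!](s)=[\![e]\!](s)\cdot\eta(s)$; $[\![C^{\langle e,e'\rangle}]\!]$ is the least fixed point (pointwise order) of $\Phi(f)(s)=[\![e]\!](s)\cdot f^\dagger([\![C]\!](s))+[\![e']\!](s)\cdot\eta(s)$. Well-formed: semantics total. $\vDash\{\varphi\}C\{\psi\}$ for $\varphi,\psi\subseteq\mathcal W(\mathcal S)$ iff $[\![C]\!]^\dagger(m)\in\psi$ for every $m\in\varphi$. $\Box P=\{m:\mathrm{supp}(m)\subseteq P\}$. $\mathrm{free}(P)=\{x\in\mathsf{Var}:\exists s\in P, v\in\mathbb Z.\ s[x\mapsto v]\notin P\}$. $\mathrm{mod}(\mathsf{skip})=\mathrm{mod}(\mathsf{assume}\ e)=\emptyset$, $\mathrm{mod}(C_1;C_2)=\mathrm{mod}(C_1+C_2)=\mathrm{mod}(C_1)\cup\mathrm{mod}(C_2)$, $\mathrm{mod}(C^{\langle e,e'\rangle})=\mathrm{mod}(C)$, $\mathrm{mod}(x:=E)=\{x\}$. *)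

theory Defs
  imports "HOL-Library.Countable_Set"
begin

class psemiring = zero + one + times +
  fixes pplus :: "'a \<Rightarrow> 'a \<Rightarrow> 'a option"
  assumes pplus_comm: "pplus a b = pplus b a"
    and pplus_zero: "pplus a 0 = Some a"
    and pplus_assoc: "pplus a b = Some ab \<Longrightarrow> pplus ab c = Some abc \<Longrightarrow>
                      \<exists>bc. pplus b c = Some bc \<and> pplus a bc = Some abc"
    and ps_mult_assoc: "(a * b) * c = a * (b * c)"
    and ps_mult_one_left: "1 * a = a"
    and ps_mult_one_right: "a * 1 = a"
    and ps_distrib_left: "pplus b c = Some bc \<Longrightarrow> pplus (a * b) (a * c) = Some (a * bc)"
    and ps_distrib_right: "pplus a b = Some ab \<Longrightarrow> pplus (a * c) (b * c) = Some (ab * c)"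
    and ps_mult_zero_left: "0 * a = 0"
    and ps_mult_zero_right: "a * 0 = 0"
    (* naturally ordered: the relation  u \<le> v iff \<exists>w. u + w = v  is a partial order
       (reflexivity and transitivity follow from the monoid laws; antisymmetry is assumed) *)
    and natord_antisym: "(\<exists>w. pplus u w = Some v) \<Longrightarrow> (\<exists>w. pplus v w = Some u) \<Longrightarrow> u = v"

definition nle :: "'a::psemiring \<Rightarrow> 'a \<Rightarrow> bool" where
  "nle u v \<longleftrightarrow> (\<exists>w. pplus u w = Some v)"

definition is_lub :: "'a::psemiring set \<Rightarrow> 'a \<Rightarrow> bool" where
  "is_lub D s \<longleftrightarrow> (\<forall>d\<in>D. nle d s) \<and> (\<forall>t. (\<forall>d\<in>D. nle d t) \<longrightarrow> nle s t)"

definition directed :: "'a::psemiring set \<Rightarrow> bool" where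
  "directed D \<longleftrightarrow> D \<noteq> {} \<and> (\<forall>a\<in>D. \<forall>b\<in>D. \<exists>c\<in>D. nle a c \<and> nle b c)"

definition lub :: "'a::psemiring set \<Rightarrow> 'a" where
  "lub D = (THE s. is_lub D s)"

class cont_psemiring = psemiring +
  assumes dcpo: "directed D \<Longrightarrow> \<exists>s. is_lub D s"
    and times_cont_left: "directed D \<Longrightarrow> a * lub D = lub ((\<lambda>d. a * d) ` D)"
    and times_cont_right: "directed D \<Longrightarrow> lub D * a = lub ((\<lambda>d. d * a) ` D)"
    and pplus_cont: "directed D \<Longrightarrow> (\<forall>d\<in>D. pplus d a \<noteq> None) \<Longrightarrow>
                       pplus (lub D) a = Some (lub ((\<lambda>d. the (pplus d a)) ` D))"
    and has_top: "\<exists>t. \<forall>u. nle u t"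

inductive fsum :: "('b \<Rightarrow> 'a::psemiring) \<Rightarrow> 'b set \<Rightarrow> 'a \<Rightarrow> bool" for g where
  fsum_empty: "fsum g {} 0"
| fsum_insert: "x \<notin> F \<Longrightarrow> fsum g F u \<Longrightarrow> pplus u (g x) = Some v \<Longrightarrow> fsum g (insert x F) v"

definition psum :: "('b \<Rightarrow> 'a::psemiring) \<Rightarrow> 'b set \<Rightarrow> 'a option" where
  "psum g A =
     (let S = {v. \<exists>F. finite F \<and> F \<subseteq> A \<and> fsum g F v} in
      if (\<forall>F. finite F \<and> F \<subseteq> A \<longrightarrow> (\<exists>v. fsum g F v)) \<and> (\<exists>s. is_lub S s)
      then Some (THE s. is_lub S s) else None)"

definition wsupp :: "('b \<Rightarrow> 'a::zero) \<Rightarrow> 'b set" where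
  "wsupp m = {x. m x \<noteq> 0}"

definition isW :: "('b \<Rightarrow> 'a::psemiring) \<Rightarrow> bool" where
  "isW m \<longleftrightarrow> countable (wsupp m) \<and> psum m (wsupp m) \<noteq> None"

definition eta :: "'b \<Rightarrow> ('b \<Rightarrow> 'a::{zero,one})" where
  "eta x = (\<lambda>y. if x = y then 1 else 0)"

definition wbind :: "('b \<Rightarrow> ('c \<Rightarrow> 'a::psemiring)) \<Rightarrow> ('b \<Rightarrow> 'a) \<Rightarrow> ('c \<Rightarrow> 'a) option" where
  "wbind f m =
     (if \<forall>y. psum (\<lambda>x. m x * f x y) (wsupp m) \<noteq> None
      then (let r = (\<lambda>y. the (psum (\<lambda>x. m x * f x y) (wsupp m))) in
            if isW r then Some r else None)
      else None)"

definition wplus :: "('b \<Rightarrow> 'a::psemiring) \<Rightarrow> ('b \<Rightarrow> 'a) \<Rightarrow> ('b \<Rightarrow> 'a) option" where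
  "wplus m1 m2 =
     (if \<forall>x. pplus (m1 x) (m2 x) \<noteq> None
      then (let r = (\<lambda>x. the (pplus (m1 x) (m2 x))) in if isW r then Some r else None)
      else None)"

definition wscale :: "'a::psemiring \<Rightarrow> ('b \<Rightarrow> 'a) \<Rightarrow> ('b \<Rightarrow> 'a)" where
  "wscale u m = (\<lambda>x. u * m x)"

type_synonym 'v state = "'v \<Rightarrow> int"

datatype 'v test =
    TTrue | TFalse | TAtom "'v state set"
  | TNot "'v test" | TAnd "'v test" "'v test" | TOr "'v test" "'v test"

primrec teval :: "'v test \<Rightarrow> 'v state \<Rightarrow> bool" where
  "teval TTrue s = True"
| "teval TFalse s = False"
| "teval (TAtom T) s = (s \<in> T)"
| "teval (TNot t) s = (\<not> teval t s)"
| "teval (TAnd t1 t2) s = (teval t1 s \<and> teval t2 s)"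
| "teval (TOr t1 t2) s = (teval t1 s \<or> teval t2 s)"

datatype 'v expr =
    EVar 'v | EConst int | ETest "'v test"
  | EPlus "'v expr" "'v expr" | EMinus "'v expr" "'v expr" | ETimes "'v expr" "'v expr"

primrec eeval :: "'v expr \<Rightarrow> 'v state \<Rightarrow> int" where
  "eeval (EVar x) s = s x"
| "eeval (EConst n) s = n"
| "eeval (ETest t) s = (if teval t s then 1 else 0)"
| "eeval (EPlus a b) s = eeval a s + eeval b s"
| "eeval (EMinus a b) s = eeval a s - eeval b s"
| "eeval (ETimes a b) s = eeval a s * eeval b s"

datatype ('v, 'a) guard = GTest "'v test" | GWeight 'a

primrec geval :: "('v, 'a::{zero,one}) guard \<Rightarrow> 'v state \<Rightarrow> 'a" where
  "geval (GTest t) s = (if teval t s then 1 else 0)"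
| "geval (GWeight u) s = u"

datatype ('v, 'a) prog =
    Skip
  | Seq "('v, 'a) prog" "('v, 'a) prog"
  | Choice "('v, 'a) prog" "('v, 'a) prog"
  | Assume "('v, 'a) guard"
  | Loop "('v, 'a) prog" "('v, 'a) guard" "('v, 'a) guard"
  | Assign 'v "'v expr"

type_synonym ('v, 'a) den = "'v state \<Rightarrow> ('v state \<Rightarrow> 'a)"

definition fle :: "('v, 'a::psemiring) den \<Rightarrow> ('v, 'a) den \<Rightarrow> bool" where
  "fle f g \<longleftrightarrow> (\<forall>s t. nle (f s t) (g s t))"

definition phi_step :: "('v, 'a::psemiring) guard \<Rightarrow> ('v, 'a) guard \<Rightarrow> ('v, 'a) den \<Rightarrow>
                         ('v, 'a) den \<Rightarrow> 'v state \<Rightarrow> ('v state \<Rightarrow> 'a) option" where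
  "phi_step e e' c f s =
     (case wbind f (c s) of
        None \<Rightarrow> None
      | Some m \<Rightarrow> wplus (wscale (geval e s) m) (wscale (geval e' s) (eta s)))"

definition phi :: "('v, 'a::psemiring) guard \<Rightarrow> ('v, 'a) guard \<Rightarrow> ('v, 'a) den \<Rightarrow>
                    ('v, 'a) den \<Rightarrow> ('v, 'a) den option" where
  "phi e e' c f =
     (if \<forall>s. phi_step e e' c f s \<noteq> None
      then Some (\<lambda>s. the (phi_step e e' c f s)) else None)"

definition loop_sem :: "('v, 'a::psemiring) guard \<Rightarrow> ('v, 'a) guard \<Rightarrow> ('v, 'a) den \<Rightarrow>
                         ('v, 'a) den option" where
  "loop_sem e e' c =
     (let FP = {f. (\<forall>s. isW (f s)) \<and> phi e e' c f = Some f} in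
      if \<exists>f\<in>FP. \<forall>g\<in>FP. fle f g
      then Some (THE f. f \<in> FP \<and> (\<forall>g\<in>FP. fle f g)) else None)"

text \<open>Denotation of a program; \<open>None\<close> means the semantics is not total.\<close>
fun sem :: "('v, 'a::psemiring) prog \<Rightarrow> ('v, 'a) den option" where
  "sem Skip = Some eta"
| "sem (Seq C1 C2) =
     (case (sem C1, sem C2) of
        (Some c1, Some c2) \<Rightarrow>
          if \<forall>s. wbind c2 (c1 s) \<noteq> None then Some (\<lambda>s. the (wbind c2 (c1 s))) else None
      | _ \<Rightarrow> None)"
| "sem (Choice C1 C2) =
     (case (sem C1, sem C2) of
        (Some c1, Some c2) \<Rightarrow>
          if \<forall>s. wplus (c1 s) (c2 s) \<noteq> None then Some (\<lambda>s. the (wplus (c1 s) (c2 s))) else None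
      | _ \<Rightarrow> None)"
| "sem (Assume e) =
     (if \<forall>s. isW (wscale (geval e s) (eta s))
      then Some (\<lambda>s. wscale (geval e s) (eta s)) else None)"
| "sem (Loop C e e') =
     (case sem C of Some c \<Rightarrow> loop_sem e e' c | None \<Rightarrow> None)"
| "sem (Assign x E) = Some (\<lambda>s. eta (s(x := eeval E s)))"

definition well_formed :: "('v, 'a::psemiring) prog \<Rightarrow> bool" where
  "well_formed C \<longleftrightarrow> sem C \<noteq> None"

definition valid :: "('v state \<Rightarrow> 'a::psemiring) set \<Rightarrow> ('v, 'a) prog \<Rightarrow>
                      ('v state \<Rightarrow> 'a) set \<Rightarrow> bool" where
  "valid \<phi> C \<psi> \<longleftrightarrow>
     (case sem C of
        None \<Rightarrow> False
      | Some c \<Rightarrow> (\<forall>m\<in>\<phi>. case wbind c m of None \<Rightarrow> False | Some m' \<Rightarrow> m' \<in> \<psi>))"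

definition Box :: "'v state set \<Rightarrow> ('v state \<Rightarrow> 'a::psemiring) set" where
  "Box P = {m. isW m \<and> wsupp m \<subseteq> P}"

definition free :: "'v state set \<Rightarrow> 'v set" where
  "free P = {x. \<exists>s\<in>P. \<exists>v::int. s(x := v) \<notin> P}"

primrec modv :: "('v, 'a) prog \<Rightarrow> 'v set" where
  "modv Skip = {}"
| "modv (Assume e) = {}"
| "modv (Seq C1 C2) = modv C1 \<union> modv C2"
| "modv (Choice C1 C2) = modv C1 \<union> modv C2"
| "modv (Loop C e e') = modv C"
| "modv (Assign x E) = {x}"

end

theory Submission
  imports Defs
begin

(*
  If no modified variable of C is free in P, every transition s \<rightarrow> t of C with nonzero weight
  keeps s and t on the same side of P: assignments to variables outside free(P) cannot cross the
  boundary of P, and the property survives Kleisli composition, sums and scaling.  For a loop,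
  restricting the least fixed point to same-side transitions yields another fixed point, so by
  minimality the least one already vanishes across the boundary.  Hence pushing a weighting
  supported in P through C keeps its support in P.

  It remains to see that the push-forward is defined at all.  Each finite partial sum is dominated
  by the sum weighted with the top element, and Scott continuity of addition allows inner sums to
  be replaced by their suprema when the order of a double summation is swapped.
*)

lemma pplus_assoc':
  fixes a b c :: "'a::psemiring"
  assumes "pplus b c = Some bc" "pplus a bc = Some abc"
  shows "\<exists>ab. pplus a b = Some ab \<and> pplus ab c = Some abc"
  using pplus_assoc[of c b bc a abc] assms by (metis pplus_comm)

lemma nle_refl: "nle u (u::'a::psemiring)"
  unfolding nle_def using pplus_zero by blast

lemma nle_zero: "nle 0 (u::'a::psemiring)"
  unfolding nle_def using pplus_zero pplus_comm by metis

lemma nle_antisym: "nle u v \<Longrightarrow> nle v u \<Longrightarrow> u = (v::'a::psemiring)"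
  unfolding nle_def by (rule natord_antisym)

lemma nle_0_iff: "nle u 0 \<longleftrightarrow> u = (0::'a::psemiring)"
  using nle_zero nle_antisym nle_refl by blast

lemma nle_mult_left: "nle u v \<Longrightarrow> nle (a * u) (a * (v::'a::psemiring))"
  unfolding nle_def using ps_distrib_left by blast

(* Adjoining an absorbing element Undef for undefined sums makes addition total, so the library's
   finite sums apply; the algebraic order extends the natural order and has Undef on top. *)
datatype 'a pval = Val 'a | Undef

instantiation pval :: (psemiring) comm_monoid_add
begin

definition zero_pval :: "'a pval" where
  "0 = Val 0"

fun plus_pval :: "'a pval \<Rightarrow> 'a pval \<Rightarrow> 'a pval" where
  "Val a + Val b = (case pplus a b of Some c \<Rightarrow> Val c | None \<Rightarrow> Undef)"
| "_ + _ = Undef"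

lemma Val_plus_Val_eq_Val: "Val a + Val b = Val c \<longleftrightarrow> pplus a b = Some c"
  by (cases "pplus a b") auto

instance
proof
  fix x y z :: "'a pval"
  show "x + y + z = x + (y + z)"
  proof (cases x; cases y; cases z)
    fix a b c assume xyz: "x = Val a" "y = Val b" "z = Val c"
    have "Val a + Val b + Val c = Val r \<longleftrightarrow> Val a + (Val b + Val c) = Val r" for r
    proof
      assume "Val a + Val b + Val c = Val r"
      then obtain ab where "pplus a b = Some ab" "pplus ab c = Some r"
        by (auto split: option.splits)
      then show "Val a + (Val b + Val c) = Val r"
        using pplus_assoc by (fastforce simp: Val_plus_Val_eq_Val)
    next
      assume "Val a + (Val b + Val c) = Val r"
      then obtain bc where "pplus b c = Some bc" "pplus a bc = Some r"
        by (auto split: option.splits)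
      then show "Val a + Val b + Val c = Val r"
        using pplus_assoc' by (fastforce simp: Val_plus_Val_eq_Val)
    qed
    then show ?thesis
      unfolding xyz by (metis pval.exhaust)
  qed auto
  show "x + y = y + x"
    by (cases x; cases y) (auto simp: pplus_comm)
  show "0 + x = x"
    by (cases x) (auto simp: zero_pval_def pplus_comm pplus_zero)
qed

end

lemma plus_Undef [simp]: "x + Undef = Undef"
  by (cases x) auto

lemma Val_plus_Val_eq_Undef [simp]: "Val a + Val b = Undef \<longleftrightarrow> pplus a b = None"
  by (auto split: option.splits)

declare plus_pval.simps(1) [simp del] Val_plus_Val_eq_Val [simp]

instantiation pval :: (psemiring) canonically_ordered_monoid_add
begin

definition less_eq_pval :: "'a pval \<Rightarrow> 'a pval \<Rightarrow> bool" where
  "less_eq_pval p q \<longleftrightarrow> (\<exists>r. q = p + r)"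

definition less_pval :: "'a pval \<Rightarrow> 'a pval \<Rightarrow> bool" where
  "less_pval p q \<longleftrightarrow> p \<le> q \<and> \<not> q \<le> p"

lemma Val_le_Val: "Val a \<le> Val b \<longleftrightarrow> nle a b"
proof
  assume "Val a \<le> Val b"
  then obtain r where "Val a + r = Val b"
    unfolding less_eq_pval_def by metis
  then show "nle a b"
    unfolding nle_def by (cases r) auto
next
  assume "nle a b"
  then obtain w where "Val a + Val w = Val b"
    unfolding nle_def Val_plus_Val_eq_Val by blast
  then show "Val a \<le> Val b"
    unfolding less_eq_pval_def by metis
qed

instance
proof
  fix p q r :: "'a pval"
  show "p < q \<longleftrightarrow> p \<le> q \<and> \<not> q \<le> p"
    by (rule less_pval_def)
  show "p \<le> p"
    unfolding less_eq_pval_def by (metis add_0_right)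
  show "p \<le> q \<Longrightarrow> q \<le> r \<Longrightarrow> p \<le> r"
    unfolding less_eq_pval_def by (metis add.assoc)
  show "p \<le> q \<Longrightarrow> q \<le> p \<Longrightarrow> p = q"
  proof (cases p; cases q)
    fix a b assume "p = Val a" "q = Val b" "p \<le> q" "q \<le> p"
    then show "p = q" by (simp add: Val_le_Val nle_antisym)
  qed (auto simp: less_eq_pval_def)
  show "p \<le> q \<longleftrightarrow> (\<exists>r. q = p + r)"
    by (rule less_eq_pval_def)
qed

end

lemma le_neq_Undef: "p \<le> q \<Longrightarrow> q \<noteq> Undef \<Longrightarrow> p \<noteq> Undef"
  unfolding less_eq_pval_def by auto

abbreviation vsum :: "('b \<Rightarrow> 'a::psemiring) \<Rightarrow> 'b set \<Rightarrow> 'a pval" where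
  "vsum g F \<equiv> \<Sum>x\<in>F. Val (g x)"

lemma fsum_iff_vsum: "fsum g F v \<longleftrightarrow> finite F \<and> vsum g F = Val v"
proof
  assume "fsum g F v"
  then show "finite F \<and> vsum g F = Val v"
    by induction (auto simp: zero_pval_def add.commute)
next
  assume "finite F \<and> vsum g F = Val v"
  then have "finite F" "vsum g F = Val v" by auto
  then show "fsum g F v"
  proof (induction F arbitrary: v rule: finite_induct)
    case empty
    then show ?case by (simp add: zero_pval_def fsum_empty)
  next
    case (insert x F)
    then have sum_insert: "Val (g x) + vsum g F = Val v" by simp
    then obtain u where u: "vsum g F = Val u" by (cases "vsum g F") auto
    with sum_insert have "pplus u (g x) = Some v"
      by (simp add: pplus_comm)
    with insert u show ?case by (blast intro: fsum_insert)
  qed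
qed

lemma vsum_additive_map:
  fixes h :: "'a::psemiring \<Rightarrow> 'a"
  assumes "vsum g F = Val v"
    and "h 0 = 0" and "\<And>b c bc. pplus b c = Some bc \<Longrightarrow> pplus (h b) (h c) = Some (h bc)"
  shows "vsum (\<lambda>x. h (g x)) F = Val (h v)"
  using assms(1)
proof (induction F arbitrary: v rule: infinite_finite_induct)
  case (insert x F)
  then have sum_insert: "Val (g x) + vsum g F = Val v" by simp
  then obtain u where u: "vsum g F = Val u" by (cases "vsum g F") auto
  with sum_insert have "pplus (g x) u = Some v" by simp
  with insert u assms(3) show ?case by simp
qed (use assms(2) in \<open>simp_all add: zero_pval_def\<close>)

lemma vsum_subset_le: "finite G \<Longrightarrow> F \<subseteq> G \<Longrightarrow> vsum g F \<le> vsum g G"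
  by (rule sum_mono2) auto

section \<open>Infinite sums\<close>

definition partial_sums :: "('b \<Rightarrow> 'a::psemiring) \<Rightarrow> 'b set \<Rightarrow> 'a set" where
  "partial_sums g A = {v. \<exists>F. finite F \<and> F \<subseteq> A \<and> vsum g F = Val v}"

lemma psum_eq:
  "psum g A =
     (if (\<forall>F. finite F \<and> F \<subseteq> A \<longrightarrow> vsum g F \<noteq> Undef) \<and> (\<exists>s. is_lub (partial_sums g A) s)
      then Some (lub (partial_sums g A)) else None)"
proof -
  have "{v. \<exists>F. finite F \<and> F \<subseteq> A \<and> fsum g F v} = partial_sums g A"
    unfolding partial_sums_def fsum_iff_vsum by blast
  moreover have "(\<exists>v. fsum g F v) \<longleftrightarrow> finite F \<and> vsum g F \<noteq> Undef" for F
    unfolding fsum_iff_vsum by (metis pval.exhaust pval.distinct(1))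
  ultimately show ?thesis
    unfolding psum_def Let_def lub_def by auto
qed

lemma is_lub_unique: "is_lub D s \<Longrightarrow> is_lub D t \<Longrightarrow> s = t"
  unfolding is_lub_def by (meson nle_antisym)

lemma lub_eqI: "is_lub D s \<Longrightarrow> lub D = s"
  unfolding lub_def using is_lub_unique by blast

lemma directed_partial_sums:
  assumes "\<forall>F. finite F \<and> F \<subseteq> A \<longrightarrow> vsum g F \<noteq> Undef"
  shows "directed (partial_sums g A)"
  unfolding directed_def
proof
  have "0 \<in> partial_sums g A"
    unfolding partial_sums_def by (auto simp: zero_pval_def intro!: exI[of _ "{}"])
  then show "partial_sums g A \<noteq> {}" by blast
next
  show "\<forall>a\<in>partial_sums g A. \<forall>b\<in>partial_sums g A. \<exists>c\<in>partial_sums g A. nle a c \<and> nle b c"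
  proof (intro ballI)
    fix a b assume "a \<in> partial_sums g A" "b \<in> partial_sums g A"
    then obtain F G where F: "finite F" "F \<subseteq> A" "vsum g F = Val a"
      and G: "finite G" "G \<subseteq> A" "vsum g G = Val b"
      unfolding partial_sums_def by blast
    obtain c where c: "vsum g (F \<union> G) = Val c"
      using assms F G by (cases "vsum g (F \<union> G)") auto
    have "c \<in> partial_sums g A"
      unfolding partial_sums_def using F G c by blast
    moreover have "nle a c" "nle b c"
      using vsum_subset_le[of "F \<union> G" F g] vsum_subset_le[of "F \<union> G" G g] F G c
      by (auto simp: Val_le_Val)
    ultimately show "\<exists>c\<in>partial_sums g A. nle a c \<and> nle b c" by blast
  qed
qed

lemma psum_defined_iff:
  fixes g :: "'b \<Rightarrow> 'a::cont_psemiring"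
  shows "psum g A \<noteq> None \<longleftrightarrow> (\<forall>F. finite F \<and> F \<subseteq> A \<longrightarrow> vsum g F \<noteq> Undef)"
  using directed_partial_sums[of A g] dcpo[of "partial_sums g A"] by (auto simp: psum_eq)

lemma psum_eq_0: "\<forall>x\<in>A. g x = 0 \<Longrightarrow> psum g A = Some 0"
proof -
  assume zero: "\<forall>x\<in>A. g x = 0"
  have vsum_0: "vsum g F = Val 0" if "F \<subseteq> A" for F
    using zero that by (simp add: subset_eq flip: zero_pval_def)
  then have sums: "partial_sums g A = {0}"
    unfolding partial_sums_def by (auto intro!: exI[of _ "{}"])
  have lub: "is_lub (partial_sums g A) 0"
    unfolding sums is_lub_def using nle_refl nle_zero by blast
  have "\<forall>F. finite F \<and> F \<subseteq> A \<longrightarrow> vsum g F \<noteq> Undef"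
    using vsum_0 by simp
  with lub show ?thesis
    unfolding psum_eq lub_eqI[OF lub] by auto
qed

lemma psum_neq_0D: "psum g A = Some v \<Longrightarrow> v \<noteq> 0 \<Longrightarrow> \<exists>x\<in>A. g x \<noteq> 0"
  using psum_eq_0[of A g] by auto

lemma psum_cong: "(\<And>x. x \<in> A \<Longrightarrow> g x = h x) \<Longrightarrow> psum g A = psum h A"
proof -
  assume "\<And>x. x \<in> A \<Longrightarrow> g x = h x"
  then have "vsum g F = vsum h F" if "F \<subseteq> A" for F
    using that by (intro sum.cong) auto
  then show ?thesis
    by (simp add: psum_eq partial_sums_def cong: conj_cong)
qed

lemma psum_plus_defined:
  fixes g :: "'b \<Rightarrow> 'a::cont_psemiring"
  assumes sum: "psum g A = Some s"
    and bounded: "\<And>F. finite F \<Longrightarrow> F \<subseteq> A \<Longrightarrow> vsum g F + q \<noteq> Undef"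
  shows "Val s + q \<noteq> Undef"
proof -
  obtain b where b: "q = Val b"
    using bounded[of "{}"] by (cases q) auto
  have "\<forall>F. finite F \<and> F \<subseteq> A \<longrightarrow> vsum g F \<noteq> Undef"
    using bounded by fastforce
  then have dir: "directed (partial_sums g A)" and s: "s = lub (partial_sums g A)"
    using sum directed_partial_sums by (auto simp: psum_eq split: if_splits)
  have "\<forall>d\<in>partial_sums g A. pplus d b \<noteq> None"
  proof
    fix d assume "d \<in> partial_sums g A"
    then obtain F where "finite F" "F \<subseteq> A" "vsum g F = Val d"
      unfolding partial_sums_def by blast
    then show "pplus d b \<noteq> None"
      using bounded[of F] b by simp
  qed
  then have "pplus s b \<noteq> None"
    using pplus_cont[OF dir] s by simp
  then show ?thesis
    using b by simp
qed

section \<open>Totality of the Kleisli extension\<close>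

lemma sum_psum_defined:
  fixes t :: "'b \<Rightarrow> 'c \<Rightarrow> 'a::cont_psemiring"
  assumes sums: "\<And>y. psum (\<lambda>x. t x y) A = Some (r y)"
    and "finite G"
    and "\<And>F. finite F \<Longrightarrow> F \<subseteq> A \<Longrightarrow> (\<Sum>y\<in>G. vsum (\<lambda>x. t x y) F) + a \<noteq> Undef"
  shows "vsum r G + a \<noteq> Undef"
  using assms(2,3)
proof (induction G arbitrary: a rule: finite_induct)
  case empty
  then show ?case by fastforce
next
  case (insert y0 G)
  let ?S = "\<lambda>F. \<Sum>y\<in>G. vsum (\<lambda>x. t x y) F"
  have "Val (r y0) + (?S F + a) \<noteq> Undef" if F: "finite F" "F \<subseteq> A" for F
  proof (rule psum_plus_defined[OF sums])
    fix F' assume F': "finite F'" "F' \<subseteq> A"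
    have "vsum (\<lambda>x. t x y0) F' + (?S F + a) \<le> vsum (\<lambda>x. t x y0) (F \<union> F') + (?S (F \<union> F') + a)"
      using F F' by (intro add_mono sum_mono vsum_subset_le order.refl) auto
    moreover have "vsum (\<lambda>x. t x y0) (F \<union> F') + (?S (F \<union> F') + a) \<noteq> Undef"
      using insert.prems[of "F \<union> F'"] F F' insert.hyps by (simp add: add.assoc)
    ultimately show "vsum (\<lambda>x. t x y0) F' + (?S F + a) \<noteq> Undef"
      by (rule le_neq_Undef)
  qed
  then have "vsum r G + (Val (r y0) + a) \<noteq> Undef"
    by (intro insert.IH) (simp add: add.left_commute)
  then show ?case
    using insert.hyps by (simp add: add.left_commute add.assoc)
qed

lemma isW_vsum_defined:
  fixes m :: "'b \<Rightarrow> 'a::cont_psemiring"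
  assumes "isW m" "finite G"
  shows "vsum m G \<noteq> Undef"
proof -
  have "vsum m G = vsum m (G \<inter> wsupp m)"
    by (rule sum.mono_neutral_right) (use assms(2) in \<open>auto simp: wsupp_def zero_pval_def\<close>)
  moreover have "vsum m (G \<inter> wsupp m) \<noteq> Undef"
    using assms unfolding isW_def psum_defined_iff by simp
  ultimately show ?thesis by simp
qed

lemma vsum_weighted_defined:
  fixes m :: "'b \<Rightarrow> 'a::cont_psemiring"
  assumes "isW m" "finite F"
  shows "vsum (\<lambda>x. m x * u x) F \<noteq> Undef"
proof -
  obtain T :: 'a where T: "\<And>u. nle u T"
    using has_top by blast
  obtain M where "vsum m F = Val M"
    using isW_vsum_defined[OF assms] by (cases "vsum m F") auto
  then have "vsum (\<lambda>x. m x * T) F = Val (M * T)"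
    by (rule vsum_additive_map[where h = "\<lambda>u. u * T"])
      (simp_all add: ps_mult_zero_left ps_distrib_right)
  moreover have "vsum (\<lambda>x. m x * u x) F \<le> vsum (\<lambda>x. m x * T) F"
    by (intro sum_mono) (simp add: Val_le_Val nle_mult_left T)
  ultimately show ?thesis
    using le_neq_Undef by force
qed

lemma isW_restrict:
  fixes m :: "'b \<Rightarrow> 'a::cont_psemiring"
  assumes "isW m"
  shows "isW (\<lambda>y. if Q y then m y else 0)"
proof -
  let ?m = "\<lambda>y. if Q y then m y else 0"
  have supp: "wsupp ?m \<subseteq> wsupp m"
    unfolding wsupp_def by auto
  have "vsum ?m F = vsum m F" if "F \<subseteq> wsupp ?m" for F
    using that by (intro sum.cong) (auto simp: wsupp_def)
  then have "psum ?m (wsupp ?m) \<noteq> None"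
    unfolding psum_defined_iff using isW_vsum_defined[OF assms] by simp
  with supp assms show ?thesis
    unfolding isW_def by (blast intro: countable_subset)
qed

lemma isW_eta: "isW (eta s :: 'b \<Rightarrow> 'a::cont_psemiring)"
proof -
  have supp: "wsupp (eta s :: 'b \<Rightarrow> 'a) \<subseteq> {s}"
    unfolding wsupp_def eta_def by auto
  have "vsum (eta s :: 'b \<Rightarrow> 'a) F \<noteq> Undef" if "F \<subseteq> {s}" for F
    using that by (auto simp: subset_singleton_iff zero_pval_def eta_def pplus_zero)
  with supp show ?thesis
    unfolding isW_def psum_defined_iff
    by (meson countable_subset countable_empty countable_insert subset_trans)
qed

lemma wbind_SomeI:
  assumes "\<And>y. psum (\<lambda>x. m x * f x y) (wsupp m) = Some (r y)" "isW r"
  shows "wbind f m = Some r"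
  using assms by (simp add: wbind_def)

lemma wbind_SomeD:
  assumes "wbind f m = Some r"
  shows "isW r" "psum (\<lambda>x. m x * f x y) (wsupp m) = Some (r y)"
proof -
  have defined: "\<forall>y. psum (\<lambda>x. m x * f x y) (wsupp m) \<noteq> None"
    using assms unfolding wbind_def by (metis option.distinct(1))
  then have "r = (\<lambda>y. the (psum (\<lambda>x. m x * f x y) (wsupp m)))" "isW r"
    using assms unfolding wbind_def Let_def by (auto split: if_splits)
  then show "isW r" "psum (\<lambda>x. m x * f x y) (wsupp m) = Some (r y)"
    using defined by auto
qed

lemma wbind_neq_0D:
  assumes "wbind f m = Some r" "r y \<noteq> 0"
  obtains x where "m x \<noteq> 0" "f x y \<noteq> 0"
proof -
  obtain x where "x \<in> wsupp m" "m x * f x y \<noteq> 0"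
    using psum_neq_0D[OF wbind_SomeD(2)[OF assms(1)] assms(2)] by blast
  moreover from this(2) have "f x y \<noteq> 0"
    by (auto simp: ps_mult_zero_right)
  ultimately show thesis
    using that unfolding wsupp_def by blast
qed

lemma double_vsum_defined:
  fixes m :: "'b \<Rightarrow> 'a::cont_psemiring"
  assumes m: "isW m" and c: "\<And>x. x \<in> wsupp m \<Longrightarrow> isW (c x)"
    and G: "finite G" and F: "finite F" "F \<subseteq> wsupp m"
  shows "(\<Sum>y\<in>G. vsum (\<lambda>x. m x * c x y) F) \<noteq> Undef"
proof -
  have "\<forall>x\<in>F. \<exists>v. vsum (c x) G = Val v"
    using isW_vsum_defined[OF c G] F by (metis pval.exhaust subsetD)
  then obtain s where s: "\<And>x. x \<in> F \<Longrightarrow> vsum (c x) G = Val (s x)"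
    by metis
  have "(\<Sum>y\<in>G. vsum (\<lambda>x. m x * c x y) F) = (\<Sum>x\<in>F. vsum (\<lambda>y. m x * c x y) G)"
    by (rule sum.swap)
  also have "\<dots> = vsum (\<lambda>x. m x * s x) F"
  proof (rule sum.cong)
    fix x assume "x \<in> F"
    then show "vsum (\<lambda>y. m x * c x y) G = Val (m x * s x)"
      using s by (intro vsum_additive_map[where h = "\<lambda>u. m x * u"])
        (simp_all add: ps_mult_zero_right ps_distrib_left)
  qed simp
  finally show ?thesis
    using vsum_weighted_defined[OF m F(1)] by simp
qed

lemma wbind_defined:
  fixes m :: "'b \<Rightarrow> 'a::cont_psemiring"
  assumes m: "isW m" and c: "\<And>x. x \<in> wsupp m \<Longrightarrow> isW (c x)"
  shows "\<exists>r. wbind c m = Some r"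
proof -
  let ?A = "wsupp m"
  define r where "r y = the (psum (\<lambda>x. m x * c x y) ?A)" for y
  have "psum (\<lambda>x. m x * c x y) ?A \<noteq> None" for y
    unfolding psum_defined_iff by (simp add: vsum_weighted_defined[OF m])
  then have sums: "psum (\<lambda>x. m x * c x y) ?A = Some (r y)" for y
    unfolding r_def by auto
  have "wsupp r \<subseteq> (\<Union>x\<in>?A. wsupp (c x))"
  proof
    fix y assume "y \<in> wsupp r"
    then obtain x where "x \<in> ?A" "m x * c x y \<noteq> 0"
      using psum_neq_0D[OF sums] unfolding wsupp_def by blast
    then show "y \<in> (\<Union>x\<in>?A. wsupp (c x))"
      unfolding wsupp_def by (auto simp: ps_mult_zero_right)
  qed
  moreover have "countable (\<Union>x\<in>?A. wsupp (c x))"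
    using m c unfolding isW_def by (intro countable_UN) auto
  ultimately have "countable (wsupp r)"
    by (rule countable_subset)
  moreover have "vsum r G \<noteq> Undef" if "finite G" for G
    using sum_psum_defined[OF sums \<open>finite G\<close>, where a = 0]
      double_vsum_defined[OF m c \<open>finite G\<close>] by simp
  then have "psum r (wsupp r) \<noteq> None"
    unfolding psum_defined_iff by blast
  ultimately have "isW r"
    unfolding isW_def by blast
  then show ?thesis
    using wbind_SomeI sums by blast
qed

lemma wplus_SomeI:
  assumes "\<And>x. pplus (m1 x) (m2 x) = Some (r x)" "isW r"
  shows "wplus m1 m2 = Some r"
  using assms by (simp add: wplus_def)

lemma wplus_SomeD:
  assumes "wplus m1 m2 = Some r"
  shows "isW r" "pplus (m1 x) (m2 x) = Some (r x)"
proof -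
  have defined: "\<forall>x. pplus (m1 x) (m2 x) \<noteq> None"
    using assms unfolding wplus_def by (metis option.distinct(1))
  then have "r = (\<lambda>x. the (pplus (m1 x) (m2 x)))" "isW r"
    using assms unfolding wplus_def Let_def by (auto split: if_splits)
  then show "isW r" "pplus (m1 x) (m2 x) = Some (r x)"
    using defined by auto
qed

lemma phi_eq_Some_iff: "phi e e' c f = Some f \<longleftrightarrow> (\<forall>s. phi_step e e' c f s = Some (f s))"
proof
  assume fixpoint: "phi e e' c f = Some f"
  then have defined: "\<forall>s. phi_step e e' c f s \<noteq> None"
    unfolding phi_def by (metis option.distinct(1))
  with fixpoint have "(\<lambda>s. the (phi_step e e' c f s)) = f"
    unfolding phi_def by simp
  with defined show "\<forall>s. phi_step e e' c f s = Some (f s)"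
    by (metis option.collapse)
qed (simp add: phi_def)

lemma phi_step_eq_Some_iff:
  "phi_step e e' c f s = Some r \<longleftrightarrow>
     (\<exists>m. wbind f (c s) = Some m \<and> wplus (wscale (geval e s) m) (wscale (geval e' s) (eta s)) = Some r)"
  unfolding phi_step_def by (auto split: option.splits)

lemma fle_antisym: "fle f g \<Longrightarrow> fle g f \<Longrightarrow> f = (g :: ('v, 'a::psemiring) den)"
  unfolding fle_def by (intro ext) (meson nle_antisym)

lemma loop_sem_SomeD:
  assumes "loop_sem e e' c = Some f"
  shows "isW (f s)" and "phi e e' c f = Some f"
    and "(\<And>s. isW (g s)) \<Longrightarrow> phi e e' c g = Some g \<Longrightarrow> fle f g"
proof -
  define FP where "FP = {f. (\<forall>s. isW (f s)) \<and> phi e e' c f = Some f}"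
  have least: "\<exists>f\<in>FP. \<forall>g\<in>FP. fle f g" and f: "f = (THE f. f \<in> FP \<and> (\<forall>g\<in>FP. fle f g))"
    using assms unfolding loop_sem_def Let_def FP_def[symmetric] by (auto split: if_splits)
  have "\<exists>!f. f \<in> FP \<and> (\<forall>g\<in>FP. fle f g)"
    using least fle_antisym by blast
  then have "f \<in> FP \<and> (\<forall>g\<in>FP. fle f g)"
    unfolding f by (rule theI')
  then show "isW (f s)" "phi e e' c f = Some f"
    and "(\<And>s. isW (g s)) \<Longrightarrow> phi e e' c g = Some g \<Longrightarrow> fle f g"
    unfolding FP_def by blast+
qed

lemma sem_Seq_SomeE:
  assumes "sem (Seq C1 C2) = Some c"
  obtains c1 c2 where "sem C1 = Some c1" "sem C2 = Some c2" "\<And>s. wbind c2 (c1 s) = Some (c s)"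
  using assms by (auto split: option.splits if_splits)

lemma sem_Choice_SomeE:
  assumes "sem (Choice C1 C2) = Some c"
  obtains c1 c2 where "sem C1 = Some c1" "sem C2 = Some c2" "\<And>s. wplus (c1 s) (c2 s) = Some (c s)"
  using assms by (auto split: option.splits if_splits)

lemma sem_Loop_SomeE:
  assumes "sem (Loop C e e') = Some c"
  obtains c0 where "sem C = Some c0" "loop_sem e e' c0 = Some c"
  using assms by (auto split: option.splits)

lemma sem_Assume_SomeD:
  assumes "sem (Assume e) = Some c"
  shows "c = (\<lambda>s. wscale (geval e s) (eta s))" "isW (c s)"
  using assms by (auto split: if_splits)

lemma isW_sem:
  fixes C :: "('v, 'a::cont_psemiring) prog"
  assumes "sem C = Some c"
  shows "isW (c s)"
proof (cases C)
  case (Seq C1 C2)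
  from assms[unfolded Seq] show ?thesis
    by (rule sem_Seq_SomeE) (blast intro: wbind_SomeD(1))
next
  case (Choice C1 C2)
  from assms[unfolded Choice] show ?thesis
    by (rule sem_Choice_SomeE) (blast intro: wplus_SomeD(1))
next
  case (Assume e)
  then show ?thesis
    using assms sem_Assume_SomeD(2) by blast
next
  case (Loop C0 e e')
  from assms[unfolded Loop] show ?thesis
    by (rule sem_Loop_SomeE) (blast intro: loop_sem_SomeD(1))
qed (use assms isW_eta in auto)

section \<open>Programs that do not modify free variables of \<open>P\<close>\<close>

definition side_preserving :: "'s set \<Rightarrow> ('s \<Rightarrow> 's \<Rightarrow> 'a::zero) \<Rightarrow> bool" where
  "side_preserving P c \<longleftrightarrow> (\<forall>s t. c s t \<noteq> 0 \<longrightarrow> (s \<in> P \<longleftrightarrow> t \<in> P))"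

lemma upd_in_iff_notin_free:
  assumes "x \<notin> free P"
  shows "s(x := v) \<in> P \<longleftrightarrow> s \<in> P"
proof
  assume "s(x := v) \<in> P"
  then have "(s(x := v))(x := s x) \<in> P"
    using assms unfolding free_def by blast
  then show "s \<in> P" by simp
qed (use assms in \<open>auto simp: free_def\<close>)

lemma side_preserving_eta: "side_preserving P (eta :: 's \<Rightarrow> 's \<Rightarrow> 'a::{zero,one})"
  unfolding side_preserving_def eta_def by auto

lemma side_preserving_assign:
  assumes "x \<notin> free P"
  shows "side_preserving P (\<lambda>s. eta (s(x := f s)) :: 'v state \<Rightarrow> 'a::{zero,one})"
  using upd_in_iff_notin_free[OF assms] unfolding side_preserving_def eta_def by auto

lemma side_preserving_scale_eta:
  "side_preserving P (\<lambda>s. wscale (u s) (eta s :: 's \<Rightarrow> 'a::psemiring))"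
  unfolding side_preserving_def wscale_def eta_def by (auto simp: ps_mult_zero_right)

lemma side_preserving_wbind:
  assumes "side_preserving P c1" "side_preserving P c2" "\<And>s. wbind c2 (c1 s) = Some (c s)"
  shows "side_preserving P c"
  unfolding side_preserving_def
proof (intro allI impI)
  fix s t assume "c s t \<noteq> 0"
  then obtain x where "c1 s x \<noteq> 0" "c2 x t \<noteq> 0"
    by (rule wbind_neq_0D[OF assms(3)])
  with assms(1,2) show "s \<in> P \<longleftrightarrow> t \<in> P"
    unfolding side_preserving_def by blast
qed

lemma side_preserving_wplus:
  assumes "side_preserving P c1" "side_preserving P c2" "\<And>s. wplus (c1 s) (c2 s) = Some (c s)"
  shows "side_preserving P c"
  unfolding side_preserving_def
proof (intro allI impI)
  fix s t assume "c s t \<noteq> 0"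
  moreover have "pplus (c1 s t) (c2 s t) = Some (c s t)"
    using assms(3) by (rule wplus_SomeD(2))
  ultimately have "c1 s t \<noteq> 0 \<or> c2 s t \<noteq> 0"
    using pplus_zero[of 0] by (metis option.inject)
  with assms(1,2) show "s \<in> P \<longleftrightarrow> t \<in> P"
    unfolding side_preserving_def by blast
qed

definition same_side :: "'s set \<Rightarrow> 's \<Rightarrow> ('s \<Rightarrow> 'a::zero) \<Rightarrow> 's \<Rightarrow> 'a" where
  "same_side P s m = (\<lambda>t. if s \<in> P \<longleftrightarrow> t \<in> P then m t else 0)"

lemma isW_same_side: "isW m \<Longrightarrow> isW (same_side P s (m :: 's \<Rightarrow> 'a::cont_psemiring))"
  unfolding same_side_def by (rule isW_restrict)

lemma wbind_same_side:
  fixes c :: "'s \<Rightarrow> 's \<Rightarrow> 'a::cont_psemiring"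
  assumes "side_preserving P c" "wbind f (c s) = Some m"
  shows "wbind (\<lambda>x. same_side P x (f x)) (c s) = Some (same_side P s m)"
proof (rule wbind_SomeI)
  show "isW (same_side P s m)"
    using wbind_SomeD(1)[OF assms(2)] by (rule isW_same_side)
next
  fix y
  have side: "x \<in> P \<longleftrightarrow> s \<in> P" if "x \<in> wsupp (c s)" for x
    using assms(1) that unfolding side_preserving_def wsupp_def by auto
  show "psum (\<lambda>x. c s x * same_side P x (f x) y) (wsupp (c s)) = Some (same_side P s m y)"
  proof (cases "s \<in> P \<longleftrightarrow> y \<in> P")
    case True
    then have "psum (\<lambda>x. c s x * same_side P x (f x) y) (wsupp (c s)) =
        psum (\<lambda>x. c s x * f x y) (wsupp (c s))"
      using side by (intro psum_cong) (simp add: same_side_def)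
    with True show ?thesis
      using wbind_SomeD(2)[OF assms(2)] by (simp add: same_side_def)
  next
    case False
    then show ?thesis
      using side by (simp add: psum_eq_0 same_side_def ps_mult_zero_right)
  qed
qed

lemma wplus_same_side:
  fixes m :: "'s \<Rightarrow> 'a::cont_psemiring"
  assumes "wplus (wscale u m) (wscale u' (eta s)) = Some r"
  shows "wplus (wscale u (same_side P s m)) (wscale u' (eta s)) = Some (same_side P s r)"
proof (rule wplus_SomeI)
  show "isW (same_side P s r)"
    using wplus_SomeD(1)[OF assms] by (rule isW_same_side)
next
  fix y
  show "pplus (wscale u (same_side P s m) y) (wscale u' (eta s) y) = Some (same_side P s r y)"
  proof (cases "s \<in> P \<longleftrightarrow> y \<in> P")
    case True
    then show ?thesis
      using wplus_SomeD(2)[OF assms] by (simp add: same_side_def wscale_def)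
  next
    case False
    then have "y \<noteq> s" by blast
    with False show ?thesis
      by (simp add: same_side_def wscale_def eta_def ps_mult_zero_right pplus_zero)
  qed
qed

lemma phi_same_side:
  fixes c :: "('v, 'a::cont_psemiring) den"
  assumes "side_preserving P c" "phi e e' c f = Some f"
  shows "phi e e' c (\<lambda>s. same_side P s (f s)) = Some (\<lambda>s. same_side P s (f s))"
  unfolding phi_eq_Some_iff phi_step_eq_Some_iff
proof
  fix s
  have "phi_step e e' c f s = Some (f s)"
    using assms(2) unfolding phi_eq_Some_iff by blast
  then obtain m where bind: "wbind f (c s) = Some m"
    and plus: "wplus (wscale (geval e s) m) (wscale (geval e' s) (eta s)) = Some (f s)"
    unfolding phi_step_eq_Some_iff by blast
  have "wbind (\<lambda>s. same_side P s (f s)) (c s) = Some (same_side P s m)"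
    using assms(1) bind by (rule wbind_same_side)
  moreover have "wplus (wscale (geval e s) (same_side P s m)) (wscale (geval e' s) (eta s)) =
      Some (same_side P s (f s))"
    using plus by (rule wplus_same_side)
  ultimately show "\<exists>m. wbind (\<lambda>s. same_side P s (f s)) (c s) = Some m \<and>
      wplus (wscale (geval e s) m) (wscale (geval e' s) (eta s)) = Some (same_side P s (f s))"
    by blast
qed

lemma side_preserving_loop_sem:
  fixes c0 :: "('v, 'a::cont_psemiring) den"
  assumes "side_preserving P c0" "loop_sem e e' c0 = Some c"
  shows "side_preserving P c"
proof -
  let ?g = "\<lambda>s. same_side P s (c s)"
  have "fle c ?g"
  proof (rule loop_sem_SomeD(3)[OF assms(2)])
    show "isW (?g s)" for s
      using loop_sem_SomeD(1)[OF assms(2)] by (rule isW_same_side)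
    show "phi e e' c0 ?g = Some ?g"
      using assms(1) loop_sem_SomeD(2)[OF assms(2)] by (rule phi_same_side)
  qed
  show ?thesis
    unfolding side_preserving_def
  proof (intro allI impI)
    fix s t assume "c s t \<noteq> 0"
    show "s \<in> P \<longleftrightarrow> t \<in> P"
    proof (rule ccontr)
      assume "\<not> (s \<in> P \<longleftrightarrow> t \<in> P)"
      then have "?g s t = 0"
        by (simp add: same_side_def)
      with \<open>fle c ?g\<close> have "nle (c s t) 0"
        unfolding fle_def by metis
      with \<open>c s t \<noteq> 0\<close> show False
        by (simp add: nle_0_iff)
    qed
  qed
qed

lemma side_preserving_sem:
  fixes C :: "('v, 'a::cont_psemiring) prog"
  assumes "sem C = Some c" "free P \<inter> modv C = {}"
  shows "side_preserving P c"
  using assms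
proof (induction C arbitrary: c)
  case Skip
  then show ?case by (simp add: side_preserving_eta)
next
  case (Seq C1 C2)
  from Seq.prems(1) show ?case
    by (rule sem_Seq_SomeE) (use Seq in \<open>auto intro: side_preserving_wbind\<close>)
next
  case (Choice C1 C2)
  from Choice.prems(1) show ?case
    by (rule sem_Choice_SomeE) (use Choice in \<open>auto intro: side_preserving_wplus\<close>)
next
  case (Assume e)
  have "c = (\<lambda>s. wscale (geval e s) (eta s))"
    using Assume.prems(1) by (rule sem_Assume_SomeD(1))
  then show ?case
    by (simp only: side_preserving_scale_eta)
next
  case (Loop C0 e e')
  from Loop.prems(1) show ?case
    by (rule sem_Loop_SomeE) (use Loop in \<open>auto intro: side_preserving_loop_sem\<close>)
next
  case (Assign x E)
  then have "x \<notin> free P" "c = (\<lambda>s. eta (s(x := eeval E s)))"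
    by auto
  then show ?case
    by (simp add: side_preserving_assign)
qed

lemma wsupp_wbind_subset:
  assumes "side_preserving P c" "wbind c m = Some r" "wsupp m \<subseteq> P"
  shows "wsupp r \<subseteq> P"
proof
  fix t assume "t \<in> wsupp r"
  then obtain s where "m s \<noteq> 0" "c s t \<noteq> 0"
    using assms(2) unfolding wsupp_def by (auto elim: wbind_neq_0D)
  with assms(1,3) show "t \<in> P"
    unfolding side_preserving_def wsupp_def by blast
qed

theorem lemmaC1:
  fixes C :: "('v::countable, 'a::cont_psemiring) prog"
    and P :: "'v state set"
  assumes "well_formed C"
    and "free P \<inter> modv C = {}"
  shows "valid (Box P) C (Box P)"
proof -
  obtain c where c: "sem C = Some c"
    using assms(1) unfolding well_formed_def by blast
  have "case wbind c m of None \<Rightarrow> False | Some r \<Rightarrow> r \<in> Box P" if "m \<in> Box P" for m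
  proof -
    have m: "isW m" "wsupp m \<subseteq> P"
      using that unfolding Box_def by auto
    obtain r where r: "wbind c m = Some r"
      using wbind_defined[OF m(1)] isW_sem[OF c] by blast
    have "wsupp r \<subseteq> P"
      using side_preserving_sem[OF c assms(2)] r m(2) by (rule wsupp_wbind_subset)
    with r show ?thesis
      using wbind_SomeD(1)[OF r] by (simp add: Box_def)
  qed
  then show ?thesis
    unfolding valid_def c by simp
qed

end
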